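(* Let $A\in\mathbb R^{m\times N}$, let $\mathcal B=(\mathcal B_1,\dots,\mathcal B_B)$ be a block structure with weights $\omega=(\omega_1,\dots,\omega_B)$, $\omega_i\ge1$. Let $s\ge2\|\omega\|_\infty^2$ and suppose $A$ satisfies the WBRIP of order $2s$ with constant $\delta_{2s}<\frac{1}{2\sqrt2+1}$. Then $A$ satisfies the $\ell^2_\omega$-BRNSP of order $s$ with constants $\rho=\frac{2\sqrt2\,\delta_{2s}}{1-\delta_{2s}}$ and $\tau=\frac{\sqrt{1+\delta_{2s}}}{1-\delta_{2s}}$.
   Context: Block structure: $\mathcal B=(\mathcal B_1,\dots,\mathcal B_B)$ partition of $\{1,\dots,N\}$; $x[b]=x[\mathcal B_b]$; for $S\subseteq\{1,\dots,B\}$, $x[S]$ equals $x$ on blocks in $S$ and $0$ elsewhere, $S^c$ its complement. Weights $\omega_b\ge1$, $\|\omega\|_\infty=\max_b\omega_b$, $\omega(S)=\sum_{b\in S}\omega_b^2$. $\|x\|_{2,p}^{(\omega)}=\big(\sum_b\omega_b^{2-p}\|x[b]\|_2^p\big)^{1/p}$. $\|x\|_0^{(\omega)}=\omega(\{b:x[b]\ne0\})$. Definition ($\ell^p_\omega$-BRNSP): $A$ satisfies the weighted block $\ell^p$ robust null space property of order $s$ with constants $\rho\in(0,1)$, $\tau>0$ if $\|x[S]\|_{2,p}^{(\omega)}\le\frac{\rho}{s^{1-1/p}}\|x[S^c]\|_{2,1}^{(\omega)}+\tau\|Ax\|_2$ for all $x\in\mathbb R^N$ and all $S$ with $\omega(S)\le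 s$. Definition (WBRIP): $A$ satisfies the weighted block restricted isometry property of order $t\ge\|\omega\|_\infty$ with constant $\delta\in(0,1)$ if $(1-\delta)\|x\|_2^2\le\|Ax\|_2^2\le(1+\delta)\|x\|_2^2$ for all $x$ with $\|x\|_0^{(\omega)}\le t$; the smallest such $\delta$ is denoted $\delta_t$. *)

theory Defs
  imports "HOL-Analysis.Analysis"
begin

text \<open>A block structure is a surjective map \<open>blk :: 'n \<Rightarrow> 'b\<close>, block b being
  the (nonempty) set of indices i with blk i = b.\<close>

definition block_structure :: "('n::finite \<Rightarrow> 'b::finite) \<Rightarrow> bool" where
  "block_structure blk \<longleftrightarrow> surj blk"

definition bnorm :: "('n::finite \<Rightarrow> 'b) \<Rightarrow> real ^ 'n \<Rightarrow> 'b \<Rightarrow> real" where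
  "bnorm blk x b = sqrt (\<Sum>i\<in>{i. blk i = b}. (x $ i)\<^sup>2)"

definition brestrict :: "('n::finite \<Rightarrow> 'b) \<Rightarrow> 'b set \<Rightarrow> real ^ 'n \<Rightarrow> real ^ 'n" where
  "brestrict blk S x = (\<chi> i. if blk i \<in> S then x $ i else 0)"

definition wset :: "('b \<Rightarrow> real) \<Rightarrow> 'b set \<Rightarrow> real" where
  "wset \<omega> S = (\<Sum>b\<in>S. (\<omega> b)\<^sup>2)"

definition wmax :: "('b::finite \<Rightarrow> real) \<Rightarrow> real" where
  "wmax \<omega> = Max (range \<omega>)"

definition wnorm :: "('n::finite \<Rightarrow> 'b::finite) \<Rightarrow> ('b \<Rightarrow> real) \<Rightarrow> real \<Rightarrow> real ^ 'n \<Rightarrow> real" where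
  "wnorm blk \<omega> p x = (\<Sum>b\<in>UNIV. \<omega> b powr (2 - p) * bnorm blk x b powr p) powr (1 / p)"

definition wsparsity :: "('n::finite \<Rightarrow> 'b::finite) \<Rightarrow> ('b \<Rightarrow> real) \<Rightarrow> real ^ 'n \<Rightarrow> real" where
  "wsparsity blk \<omega> x = wset \<omega> {b. brestrict blk {b} x \<noteq> 0}"

definition brnsp :: "('n::finite \<Rightarrow> 'b::finite) \<Rightarrow> ('b \<Rightarrow> real) \<Rightarrow> real \<Rightarrow> real ^ 'n ^ 'm \<Rightarrow>
    real \<Rightarrow> real \<Rightarrow> real \<Rightarrow> bool" where
  "brnsp blk \<omega> p A s \<rho> \<tau> \<longleftrightarrow> 0 < \<rho> \<and> \<rho> < 1 \<and> 0 < \<tau> \<and>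
     (\<forall>x S. wset \<omega> S \<le> s \<longrightarrow>
        wnorm blk \<omega> p (brestrict blk S x)
          \<le> \<rho> / s powr (1 - 1 / p) * wnorm blk \<omega> 1 (brestrict blk (- S) x) + \<tau> * norm (A *v x))"

definition wbrip_ineq :: "('n::finite \<Rightarrow> 'b::finite) \<Rightarrow> ('b \<Rightarrow> real) \<Rightarrow> real ^ 'n ^ 'm \<Rightarrow>
    real \<Rightarrow> real \<Rightarrow> bool" where
  "wbrip_ineq blk \<omega> A t \<delta> \<longleftrightarrow>
     (\<forall>x. wsparsity blk \<omega> x \<le> t \<longrightarrow>
        (1 - \<delta>) * (norm x)\<^sup>2 \<le> (norm (A *v x))\<^sup>2 \<and> (norm (A *v x))\<^sup>2 \<le> (1 + \<delta>) * (norm x)\<^sup>2)"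

definition wbrip :: "('n::finite \<Rightarrow> 'b::finite) \<Rightarrow> ('b \<Rightarrow> real) \<Rightarrow> real ^ 'n ^ 'm \<Rightarrow>
    real \<Rightarrow> real \<Rightarrow> bool" where
  "wbrip blk \<omega> A t \<delta> \<longleftrightarrow> wmax \<omega> \<le> t \<and> 0 < \<delta> \<and> \<delta> < 1 \<and> wbrip_ineq blk \<omega> A t \<delta>"

definition wbrip_const :: "('n::finite \<Rightarrow> 'b::finite) \<Rightarrow> ('b \<Rightarrow> real) \<Rightarrow> real ^ 'n ^ 'm \<Rightarrow>
    real \<Rightarrow> real" where
  "wbrip_const blk \<omega> A t = Inf {\<delta>. 0 \<le> \<delta> \<and> wbrip_ineq blk \<omega> A t \<delta>}"

end

theory Submission
  imports Defs
begin

text \<open>Rank the blocks outside \<open>S\<close> by \<open>\<parallel>x[b]\<parallel> / \<omega> b\<close> and cut them greedily into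
  consecutive chunks \<open>S\<^sub>1, S\<^sub>2, \<dots>\<close> of weight at most \<open>s\<close>. Since every \<open>(\<omega> b)\<^sup>2 \<le> s / 2\<close>,
  a chunk followed by another one weighs more than \<open>s / 2\<close>; hence the norm of the next chunk is
  at most \<open>\<surd>s\<close> times the smallest ratio in the current one, which in turn is at most
  \<open>2 / \<surd>s\<close> times the current chunk's weighted \<open>\<ell>\<^sub>1\<close>-mass. For \<open>u = x[S \<union> S\<^sub>1]\<close>, the WBRIP
  of order \<open>2s\<close> on disjointly supported pairs bounds each \<open>\<bar>\<langle>Au, A x[S\<^sub>k]\<rangle>\<bar>\<close>, \<open>k \<ge> 2\<close>, by
  \<open>\<surd>2 \<delta> \<parallel>u\<parallel> \<parallel>x[S\<^sub>k]\<parallel>\<close>, and \<open>(1 - \<delta>) \<parallel>u\<parallel>\<^sup>2 \<le> \<parallel>Au\<parallel>\<^sup>2 = \<langle>Au, Ax\<rangle> - \<Sum>\<^sub>k \<langle>Au, A x[S\<^sub>k]\<rangle>\<close>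
  then bounds \<open>\<parallel>x[S]\<parallel> \<le> \<parallel>u\<parallel>\<close>.\<close>

section \<open>Near-isometries on inner product spaces\<close>

lemma near_isometry_inner_le:
  fixes L :: "'a::real_inner \<Rightarrow> 'b::real_inner"
  assumes "linear L" and orth: "orthogonal y z"
    and iso: "\<And>c d. (1 - \<delta>) * (norm (c *\<^sub>R y + d *\<^sub>R z))\<^sup>2 \<le> (norm (L (c *\<^sub>R y + d *\<^sub>R z)))\<^sup>2
                    \<and> (norm (L (c *\<^sub>R y + d *\<^sub>R z)))\<^sup>2 \<le> (1 + \<delta>) * (norm (c *\<^sub>R y + d *\<^sub>R z))\<^sup>2"
  shows "\<bar>inner (L y) (L z)\<bar> \<le> \<delta> * norm y * norm z"
proof -
  define a b p where "a = norm y" and "b = norm z" and "p = inner (L y) (L z)"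
  have norm_comb: "(norm (c *\<^sub>R y + d *\<^sub>R z))\<^sup>2 = c\<^sup>2 * a\<^sup>2 + d\<^sup>2 * b\<^sup>2" for c d
    using orth unfolding orthogonal_def power2_norm_eq_inner a_def b_def
    by (simp add: inner_add_left inner_add_right inner_commute algebra_simps power2_eq_square)
  have image_comb: "(norm (L (c *\<^sub>R y + d *\<^sub>R z)))\<^sup>2
      = c\<^sup>2 * (norm (L y))\<^sup>2 + 2 * c * d * p + d\<^sup>2 * (norm (L z))\<^sup>2" for c d
    using \<open>linear L\<close> unfolding power2_norm_eq_inner p_def
    by (simp add: linear_add linear_scale inner_add_left inner_add_right inner_commute
        algebra_simps power2_eq_square)
  \<comment> \<open>Polarization: the images of \<open>b y + a z\<close> and \<open>b y - a z\<close> differ in squared norm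
      by \<open>4 a b p\<close>, while both vectors have squared norm \<open>2 a\<^sup>2 b\<^sup>2\<close>.\<close>
  have "4 * (a * b * p) \<le> 4 * (\<delta> * (a * b) * (a * b))" "- (4 * (a * b * p)) \<le> 4 * (\<delta> * (a * b) * (a * b))"
    using iso[of b a] iso[of b "- a"] norm_comb[of b a] norm_comb[of b "- a"]
      image_comb[of b a] image_comb[of b "- a"]
    by (simp_all add: algebra_simps power2_eq_square)
  then have "\<bar>a * b * p\<bar> \<le> \<delta> * (a * b) * (a * b)"
    unfolding abs_le_iff by linarith
  moreover have "\<bar>a * b * p\<bar> = a * b * \<bar>p\<bar>"
    by (simp add: a_def b_def abs_mult)
  ultimately have "a * b * \<bar>p\<bar> \<le> a * b * (\<delta> * a * b)"
    by (simp add: algebra_simps)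
  moreover have "a * b = 0 \<Longrightarrow> p = 0"
    by (auto simp: a_def b_def p_def linear_0[OF \<open>linear L\<close>])
  moreover have "0 \<le> a * b"
    by (simp add: a_def b_def)
  ultimately have "\<bar>p\<bar> \<le> \<delta> * a * b"
    by (cases "a * b = 0") (auto simp: mult_le_cancel_left_pos)
  then show ?thesis by (simp add: a_def b_def p_def)
qed

lemma norm_add_le_sqrt2_norm:
  fixes y z :: "'a::real_inner"
  assumes "orthogonal y z"
  shows "norm y + norm z \<le> sqrt 2 * norm (y + z)"
proof -
  have "(norm y + norm z)\<^sup>2 \<le> 2 * ((norm y)\<^sup>2 + (norm z)\<^sup>2)"
    using sum_squares_bound[of "norm y" "norm z"] by (simp add: power2_sum)
  then have "(norm y + norm z)\<^sup>2 \<le> 2 * (norm (y + z))\<^sup>2"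
    by (simp add: norm_add_Pythagorean[OF assms])
  then have "norm y + norm z \<le> sqrt (2 * (norm (y + z))\<^sup>2)"
    by (rule real_le_rsqrt)
  then show ?thesis
    by (simp add: real_sqrt_mult)
qed

lemma norm_le_norm_add_orthogonal:
  fixes y z :: "'a::real_inner"
  assumes "orthogonal y z"
  shows "norm y \<le> norm (y + z)"
proof -
  have "(norm y)\<^sup>2 \<le> (norm (y + z))\<^sup>2"
    using norm_add_Pythagorean[OF assms] by simp
  then show ?thesis
    by (rule power2_le_imp_le) simp
qed

lemma norm_le_by_lower_isometry:
  fixes p q :: "'a::real_inner"
  assumes "(1 - \<delta>) * t\<^sup>2 \<le> (norm p)\<^sup>2" and "norm p \<le> c * t" and "\<bar>inner p q\<bar> \<le> t * E"
    and "0 \<le> t" and "0 \<le> c" and "0 \<le> E"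
  shows "(1 - \<delta>) * t \<le> c * norm (p + q) + E"
proof -
  have "(1 - \<delta>) * t\<^sup>2 \<le> inner p (p + q) - inner p q"
    using assms(1) by (simp add: inner_add_right power2_norm_eq_inner)
  also have "\<dots> \<le> norm p * norm (p + q) + t * E"
    using assms(3) norm_cauchy_schwarz[of p "p + q"] by linarith
  also have "\<dots> \<le> t * (c * norm (p + q) + E)"
    using mult_right_mono[OF assms(2) norm_ge_zero[of "p + q"]] by (simp add: algebra_simps)
  finally have "t * ((1 - \<delta>) * t) \<le> t * (c * norm (p + q) + E)"
    by (simp add: power2_eq_square algebra_simps)
  then show ?thesis
    using assms(4-6) by (cases "t = 0") (auto simp: mult_le_cancel_left_pos)
qed

section \<open>Block restrictions and weighted norms\<close>

lemma norm_brestrict_power2: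
  fixes x :: "real ^ 'n::finite" and blk :: "'n \<Rightarrow> 'b::finite"
  shows "(norm (brestrict blk T x))\<^sup>2 = (\<Sum>b\<in>T. (bnorm blk x b)\<^sup>2)"
proof -
  have "(norm (brestrict blk T x))\<^sup>2 = (\<Sum>i\<in>UNIV. (brestrict blk T x $ i)\<^sup>2)"
    unfolding power2_norm_eq_inner inner_vec_def by (simp add: power2_eq_square)
  also have "\<dots> = (\<Sum>i\<in>{i. blk i \<in> T}. (x $ i)\<^sup>2)"
    by (rule sum.mono_neutral_cong_right) (auto simp: brestrict_def)
  also have "\<dots> = (\<Sum>b\<in>T. \<Sum>i\<in>{i. blk i = b}. (x $ i)\<^sup>2)"
    by (subst sum.group[symmetric, where g = blk]) (auto intro!: sum.cong)
  also have "\<dots> = (\<Sum>b\<in>T. (bnorm blk x b)\<^sup>2)"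
    by (simp add: bnorm_def sum_nonneg)
  finally show ?thesis .
qed

lemma norm_brestrict:
  fixes x :: "real ^ 'n::finite" and blk :: "'n \<Rightarrow> 'b::finite"
  shows "norm (brestrict blk T x) = sqrt (\<Sum>b\<in>T. (bnorm blk x b)\<^sup>2)"
  by (simp flip: norm_brestrict_power2)

lemma bnorm_nonneg: "0 \<le> bnorm blk x b"
  by (simp add: bnorm_def sum_nonneg)

lemma bnorm_brestrict: "bnorm blk (brestrict blk T x) b = (if b \<in> T then bnorm blk x b else 0)"
  by (auto simp: bnorm_def brestrict_def)

lemma brestrict_Un:
  "T1 \<inter> T2 = {} \<Longrightarrow> brestrict blk (T1 \<union> T2) x = brestrict blk T1 x + brestrict blk T2 x"
  by (auto simp: brestrict_def vec_eq_iff)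

lemma brestrict_UNIV [simp]: "brestrict blk UNIV x = x"
  by (simp add: brestrict_def vec_eq_iff)

lemma orthogonal_brestrict_disjoint:
  "T1 \<inter> T2 = {} \<Longrightarrow> orthogonal (brestrict blk T1 x) (brestrict blk T2 y)"
  unfolding orthogonal_def inner_vec_def brestrict_def by (rule sum.neutral) auto

lemma wset_mono:
  fixes \<omega> :: "'b::finite \<Rightarrow> real"
  shows "T \<subseteq> U \<Longrightarrow> wset \<omega> T \<le> wset \<omega> U"
  unfolding wset_def by (rule sum_mono2) auto

lemma wset_Un_le:
  fixes \<omega> :: "'b::finite \<Rightarrow> real"
  shows "wset \<omega> (T \<union> U) \<le> wset \<omega> T + wset \<omega> U"
  unfolding wset_def by (simp add: sum_Un sum_nonneg)

lemma wsparsity_le_wset: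
  fixes \<omega> :: "'b::finite \<Rightarrow> real" and blk :: "'n::finite \<Rightarrow> 'b"
  assumes "\<And>i. blk i \<notin> T \<Longrightarrow> v $ i = 0"
  shows "wsparsity blk \<omega> v \<le> wset \<omega> T"
  unfolding wsparsity_def
proof (rule wset_mono, rule subsetI)
  fix b assume "b \<in> {b. brestrict blk {b} v \<noteq> 0}"
  then obtain i where "brestrict blk {b} v $ i \<noteq> 0" by (auto simp: vec_eq_iff)
  then show "b \<in> T" using assms by (auto simp: brestrict_def split: if_splits)
qed

lemma wnorm_2_eq_norm:
  fixes \<omega> :: "'b::finite \<Rightarrow> real" and blk :: "'n::finite \<Rightarrow> 'b"
  assumes "\<And>b. 0 < \<omega> b"
  shows "wnorm blk \<omega> 2 y = norm y"
proof -
  have "wnorm blk \<omega> 2 y = sqrt (\<Sum>b\<in>UNIV. (bnorm blk y b)\<^sup>2)"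
    using assms by (simp add: wnorm_def bnorm_nonneg powr_half_sqrt sum_nonneg less_imp_neq[symmetric])
  then show ?thesis by (simp add: norm_brestrict[of blk UNIV y, simplified])
qed

lemma wnorm_1_brestrict:
  fixes \<omega> :: "'b::finite \<Rightarrow> real" and blk :: "'n::finite \<Rightarrow> 'b"
  assumes "\<And>b. 0 < \<omega> b"
  shows "wnorm blk \<omega> 1 (brestrict blk T x) = (\<Sum>b\<in>T. \<omega> b * bnorm blk x b)"
proof -
  have "wnorm blk \<omega> 1 (brestrict blk T x) = \<bar>\<Sum>b\<in>UNIV. if b \<in> T then \<omega> b * bnorm blk x b else 0\<bar>"
    using assms unfolding wnorm_def
    by (auto intro!: arg_cong[where f = abs] sum.cong simp: bnorm_brestrict bnorm_nonneg abs_of_pos)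
  also have "\<dots> = (\<Sum>b\<in>T. \<omega> b * bnorm blk x b)"
    using assms by (simp add: sum.If_cases abs_of_nonneg sum_nonneg bnorm_nonneg less_imp_le)
  finally show ?thesis .
qed

lemma wbrip_inner_disjoint_le:
  fixes A :: "real ^ 'n ^ 'm" and blk :: "'n::finite \<Rightarrow> 'b::finite" and \<omega> :: "'b \<Rightarrow> real"
  assumes "wbrip_ineq blk \<omega> A t \<delta>" and "T1 \<inter> T2 = {}" and "wset \<omega> (T1 \<union> T2) \<le> t"
  shows "\<bar>inner (A *v brestrict blk T1 x) (A *v brestrict blk T2 x)\<bar>
           \<le> \<delta> * norm (brestrict blk T1 x) * norm (brestrict blk T2 x)"
proof -
  have "wsparsity blk \<omega> (c *\<^sub>R brestrict blk T1 x + d *\<^sub>R brestrict blk T2 x) \<le> t" for c d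
    by (rule order.trans[OF wsparsity_le_wset assms(3)]) (auto simp: brestrict_def)
  then show ?thesis
    using assms(1) unfolding wbrip_ineq_def
    by (intro near_isometry_inner_le[OF matrix_vector_mul_linear orthogonal_brestrict_disjoint[OF assms(2)]])
      simp
qed

lemma wbrip_cross_term_le:
  fixes A :: "real ^ 'n ^ 'm" and blk :: "'n::finite \<Rightarrow> 'b::finite" and \<omega> :: "'b \<Rightarrow> real"
  assumes rip: "wbrip_ineq blk \<omega> A t \<delta>" and "0 \<le> \<delta>"
    and "S \<inter> S1 = {}" and "C \<inter> (S \<union> S1) = {}"
    and "wset \<omega> (S \<union> C) \<le> t" and "wset \<omega> (S1 \<union> C) \<le> t"
  shows "\<bar>inner (A *v brestrict blk (S \<union> S1) x) (A *v brestrict blk C x)\<bar>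
           \<le> \<delta> * sqrt 2 * norm (brestrict blk (S \<union> S1) x) * norm (brestrict blk C x)"
proof -
  let ?xS = "brestrict blk S x" and ?x1 = "brestrict blk S1 x" and ?xC = "brestrict blk C x"
  have "\<bar>inner (A *v (?xS + ?x1)) (A *v ?xC)\<bar>
      \<le> \<bar>inner (A *v ?xS) (A *v ?xC)\<bar> + \<bar>inner (A *v ?x1) (A *v ?xC)\<bar>"
    by (simp add: matrix_vector_right_distrib inner_add_left abs_triangle_ineq)
  also have "\<dots> \<le> \<delta> * norm ?xS * norm ?xC + \<delta> * norm ?x1 * norm ?xC"
    using assms by (intro add_mono wbrip_inner_disjoint_le) auto
  also have "\<dots> = \<delta> * norm ?xC * (norm ?xS + norm ?x1)"
    by (simp add: algebra_simps)
  also have "\<dots> \<le> \<delta> * norm ?xC * (sqrt 2 * norm (?xS + ?x1))"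
    using \<open>0 \<le> \<delta>\<close> assms(3)
    by (intro mult_left_mono norm_add_le_sqrt2_norm orthogonal_brestrict_disjoint) auto
  finally show ?thesis
    unfolding brestrict_Un[OF assms(3)] by (simp add: algebra_simps)
qed

section \<open>Greedy chunks of blocks\<close>

lemma exists_greedy_chunk:
  fixes w r :: "'b \<Rightarrow> real"
  assumes "finite R" and "\<And>b. b \<in> R \<Longrightarrow> w b \<le> W" and "W \<le> s" and "0 \<le> s"
  obtains C where "C \<subseteq> R" and "sum w C \<le> s" and "\<forall>b\<in>C. \<forall>c\<in>R - C. r c \<le> r b"
    and "R - C \<noteq> {} \<longrightarrow> s - W < sum w C" and "R \<noteq> {} \<longrightarrow> C \<noteq> {}"
proof -
  let ?chunk = "\<lambda>C. C \<subseteq> R \<and> sum w C \<le> s \<and> (\<forall>b\<in>C. \<forall>c\<in>R - C. r c \<le> r b)"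
  have "?chunk {}"
    using \<open>0 \<le> s\<close> by simp
  moreover have "\<forall>D. ?chunk D \<longrightarrow> card D < Suc (card R)"
    using card_mono[OF \<open>finite R\<close>] by (simp add: le_imp_less_Suc)
  ultimately obtain C where C: "?chunk C" and maximal: "\<And>D. ?chunk D \<Longrightarrow> card D \<le> card C"
    using ex_has_greatest_nat[of ?chunk "{}" card "Suc (card R)"] by blast
  have finite_C: "finite C"
    using C \<open>finite R\<close> finite_subset by blast
  have large: "s - W < sum w C" if "R - C \<noteq> {}"
  proof -
    have ranks: "finite (r ` (R - C))" "r ` (R - C) \<noteq> {}"
      using \<open>finite R\<close> \<open>R - C \<noteq> {}\<close> by auto
    then obtain c where c: "c \<in> R - C" and c_rank: "r c = Max (r ` (R - C))"
      using Max_in[OF ranks] by (metis imageE)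
    have "\<forall>b\<in>insert c C. \<forall>d\<in>R - insert c C. r d \<le> r b"
      using C ranks by (auto simp: c_rank)
    moreover have "\<not> ?chunk (insert c C)"
    proof
      assume "?chunk (insert c C)"
      then have "card (insert c C) \<le> card C"
        by (rule maximal)
      then show False
        using c finite_C by simp
    qed
    ultimately have "s < sum w (insert c C)"
      using C c by auto
    also have "\<dots> = w c + sum w C"
      using c finite_C by simp
    also have "\<dots> \<le> W + sum w C"
      using assms(2) c by simp
    finally show ?thesis
      by linarith
  qed
  moreover have "R \<noteq> {} \<longrightarrow> C \<noteq> {}"
    using large \<open>W \<le> s\<close> by force
  ultimately show thesis
    using that C by blast
qed

lemma chunk_norm_le:
  fixes \<omega> n :: "'b::finite \<Rightarrow> real"
  assumes "wset \<omega> C \<le> s" and "0 \<le> M" and "\<And>b. b \<in> C \<Longrightarrow> n b / \<omega> b \<le> M"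
    and "\<And>b. 0 < \<omega> b" and "\<And>b. 0 \<le> n b"
  shows "sqrt (\<Sum>b\<in>C. (n b)\<^sup>2) \<le> sqrt s * M"
proof -
  have "(\<Sum>b\<in>C. (n b)\<^sup>2) \<le> (\<Sum>b\<in>C. (M * \<omega> b)\<^sup>2)"
  proof (rule sum_mono)
    fix b assume "b \<in> C"
    then have "n b \<le> M * \<omega> b"
      using assms(3-4)[of b] by (simp add: divide_le_eq)
    then show "(n b)\<^sup>2 \<le> (M * \<omega> b)\<^sup>2"
      using assms(5)[of b] by (rule power_mono)
  qed
  also have "\<dots> = M\<^sup>2 * wset \<omega> C"
    by (simp add: wset_def sum_distrib_left power_mult_distrib)
  also have "\<dots> \<le> M\<^sup>2 * s"
    using assms(1) by (simp add: mult_left_mono)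
  finally have "sqrt (\<Sum>b\<in>C. (n b)\<^sup>2) \<le> sqrt (M\<^sup>2 * s)"
    by (rule real_sqrt_le_mono)
  then show ?thesis
    using \<open>0 \<le> M\<close> by (simp add: real_sqrt_mult mult.commute)
qed

lemma chunk_ratio_bound:
  fixes \<omega> n :: "'b::finite \<Rightarrow> real"
  assumes "R \<noteq> {} \<Longrightarrow> s / 2 < wset \<omega> C" and "\<forall>b\<in>C. \<forall>c\<in>R. n c / \<omega> c \<le> n b / \<omega> b"
    and "\<And>b. 0 < \<omega> b" and "\<And>b. 0 \<le> n b" and "0 < s"
  obtains M where "0 \<le> M" and "\<And>c. c \<in> R \<Longrightarrow> n c / \<omega> c \<le> M"
    and "sqrt s * M \<le> 2 / sqrt s * (\<Sum>b\<in>C. \<omega> b * n b)"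
proof (cases "R = {}")
  case True
  have "0 \<le> (\<Sum>b\<in>C. \<omega> b * n b)"
    by (rule sum_nonneg) (simp add: assms(4) less_imp_le[OF assms(3)])
  then show thesis
    using that[of 0] True assms(5) by simp
next
  case False
  then have heavy: "s / 2 < wset \<omega> C"
    using assms(1) by blast
  then have "C \<noteq> {}"
    using \<open>0 < s\<close> by (auto simp: wset_def)
  define M where "M = Min ((\<lambda>b. n b / \<omega> b) ` C)"
  have M_le: "M \<le> n b / \<omega> b" if "b \<in> C" for b
    using that by (simp add: M_def)
  have "M \<in> (\<lambda>b. n b / \<omega> b) ` C"
    using \<open>C \<noteq> {}\<close> unfolding M_def by (intro Min_in) auto
  then have "0 \<le> M"
    using assms(3,4) by (auto intro: divide_nonneg_pos)
  have "M * wset \<omega> C \<le> (\<Sum>b\<in>C. \<omega> b * n b)"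
    unfolding wset_def sum_distrib_left
  proof (rule sum_mono)
    fix b assume "b \<in> C"
    have "M * (\<omega> b)\<^sup>2 \<le> n b / \<omega> b * (\<omega> b)\<^sup>2"
      using M_le[OF \<open>b \<in> C\<close>] by (rule mult_right_mono) simp
    then show "M * (\<omega> b)\<^sup>2 \<le> \<omega> b * n b"
      using assms(3)[of b] by (simp add: power2_eq_square)
  qed
  moreover have "M * (s / 2) \<le> M * wset \<omega> C"
    using \<open>0 \<le> M\<close> heavy by (intro mult_left_mono) auto
  ultimately have "sqrt s * sqrt s * M \<le> 2 * (\<Sum>b\<in>C. \<omega> b * n b)"
    using \<open>0 < s\<close> by (simp add: algebra_simps)
  then have "sqrt s * M \<le> 2 / sqrt s * (\<Sum>b\<in>C. \<omega> b * n b)"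
    using \<open>0 < s\<close> by (simp add: field_simps)
  moreover have "n c / \<omega> c \<le> M" if "c \<in> R" for c
    using assms(2) that \<open>C \<noteq> {}\<close> unfolding M_def by (auto intro!: Min.boundedI)
  ultimately show thesis
    using that \<open>0 \<le> M\<close> by blast
qed

lemma exists_weighted_chunk:
  fixes \<omega> n :: "'b::finite \<Rightarrow> real"
  assumes \<omega>_pos: "\<And>b. 0 < \<omega> b" and \<omega>_small: "\<And>b. (\<omega> b)\<^sup>2 \<le> s / 2"
    and n_nonneg: "\<And>b. 0 \<le> n b" and "0 < s"
  obtains C M where "C \<subseteq> R" and "wset \<omega> C \<le> s" and "R \<noteq> {} \<longrightarrow> C \<noteq> {}"
    and "0 \<le> M" and "\<forall>c\<in>R - C. n c / \<omega> c \<le> M"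
    and "sqrt s * M \<le> 2 / sqrt s * (\<Sum>b\<in>C. \<omega> b * n b)"
proof -
  obtain C where C: "C \<subseteq> R" "wset \<omega> C \<le> s" "\<forall>b\<in>C. \<forall>c\<in>R - C. n c / \<omega> c \<le> n b / \<omega> b"
    "R - C \<noteq> {} \<longrightarrow> s - s / 2 < wset \<omega> C" "R \<noteq> {} \<longrightarrow> C \<noteq> {}"
    unfolding wset_def
    by (rule exists_greedy_chunk[of R "\<lambda>b. (\<omega> b)\<^sup>2" "s / 2" s "\<lambda>b. n b / \<omega> b"])
      (use \<omega>_small \<open>0 < s\<close> in auto)
  moreover obtain M where "0 \<le> M" "\<And>c. c \<in> R - C \<Longrightarrow> n c / \<omega> c \<le> M"
    "sqrt s * M \<le> 2 / sqrt s * (\<Sum>b\<in>C. \<omega> b * n b)"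
    by (rule chunk_ratio_bound[of "R - C" s \<omega> C n]) (use C \<omega>_pos n_nonneg \<open>0 < s\<close> in auto)
  ultimately show thesis
    using that by blast
qed

lemma additive_bound_by_chunks:
  fixes f :: "'b::finite set \<Rightarrow> real" and \<omega> n :: "'b \<Rightarrow> real"
  assumes additive: "\<And>C D. C \<inter> D = {} \<Longrightarrow> f (C \<union> D) = f C + f D"
    and chunk_bound: "\<And>C. C \<subseteq> R \<Longrightarrow> wset \<omega> C \<le> s \<Longrightarrow> \<bar>f C\<bar> \<le> K * sqrt (\<Sum>b\<in>C. (n b)\<^sup>2)"
    and "0 \<le> M" and ratio_le: "\<And>b. b \<in> R \<Longrightarrow> n b / \<omega> b \<le> M"
    and "0 \<le> K" and \<omega>_pos: "\<And>b. 0 < \<omega> b" and \<omega>_small: "\<And>b. (\<omega> b)\<^sup>2 \<le> s / 2"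
    and n_nonneg: "\<And>b. 0 \<le> n b" and "0 < s"
  shows "\<bar>f R\<bar> \<le> K * (sqrt s * M + 2 / sqrt s * (\<Sum>b\<in>R. \<omega> b * n b))"
  using chunk_bound \<open>0 \<le> M\<close> ratio_le
proof (induction "card R" arbitrary: R M rule: less_induct)
  case less
  note chunk_bound = less.prems(1) and ratio_le = less.prems(3)
  show ?case
  proof (cases "R = {}")
    case True
    have "f {} = 0"
      using additive[OF Int_empty_left, of "{}"] unfolding Un_empty_left by linarith
    then show ?thesis
      using True \<open>0 \<le> K\<close> \<open>0 \<le> M\<close> \<open>0 < s\<close> by simp
  next
    case False
    obtain C M' where C: "C \<subseteq> R" "wset \<omega> C \<le> s" "R \<noteq> {} \<longrightarrow> C \<noteq> {}"
      and "0 \<le> M'" and ratio_le': "\<forall>c\<in>R - C. n c / \<omega> c \<le> M'"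
      and M': "sqrt s * M' \<le> 2 / sqrt s * (\<Sum>b\<in>C. \<omega> b * n b)"
      by (rule exists_weighted_chunk[where \<omega> = \<omega> and n = n and R = R, OF \<omega>_pos \<omega>_small n_nonneg \<open>0 < s\<close>])
    have "\<bar>f C\<bar> \<le> K * sqrt (\<Sum>b\<in>C. (n b)\<^sup>2)"
      using chunk_bound C by blast
    also have "\<dots> \<le> K * (sqrt s * M)"
      using chunk_norm_le[of \<omega> C s M n] C ratio_le \<omega>_pos n_nonneg \<open>0 \<le> M\<close> \<open>0 \<le> K\<close>
      by (intro mult_left_mono) auto
    finally have head: "\<bar>f C\<bar> \<le> K * (sqrt s * M)" .
    have "card (R - C) < card R"
      using C False by (intro psubset_card_mono) auto
    then have tail: "\<bar>f (R - C)\<bar> \<le> K * (sqrt s * M' + 2 / sqrt s * (\<Sum>b\<in>R - C. \<omega> b * n b))"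
      using less.hyps[of "R - C" M'] chunk_bound \<open>0 \<le> M'\<close> ratio_le' by blast
    have "\<bar>f R\<bar> \<le> \<bar>f C\<bar> + \<bar>f (R - C)\<bar>"
      using additive[of C "R - C"] C(1) by (simp add: Un_absorb1)
    also have "\<dots> \<le> K * (sqrt s * M) + K * (2 / sqrt s * (\<Sum>b\<in>C. \<omega> b * n b)
                                                + 2 / sqrt s * (\<Sum>b\<in>R - C. \<omega> b * n b))"
      using head tail M' \<open>0 \<le> K\<close> by (smt (verit) mult_left_mono)
    also have "\<dots> = K * (sqrt s * M + 2 / sqrt s * (\<Sum>b\<in>R. \<omega> b * n b))"
      using C(1) by (simp add: sum.subset_diff[of C R] algebra_simps)
    finally show ?thesis .
  qed
qed

section \<open>The robust null space property\<close>

lemma wbrip_tail_inner_le: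
  fixes A :: "real ^ 'n ^ 'm" and blk :: "'n::finite \<Rightarrow> 'b::finite" and \<omega> :: "'b \<Rightarrow> real"
  assumes rip: "wbrip_ineq blk \<omega> A (2 * s) \<delta>" and "0 \<le> \<delta>" and "0 < s"
    and \<omega>_pos: "\<And>b. 0 < \<omega> b" and \<omega>_small: "\<And>b. (\<omega> b)\<^sup>2 \<le> s / 2"
    and "wset \<omega> S \<le> s" and "S1 \<subseteq> - S" and "wset \<omega> S1 \<le> s"
    and "0 \<le> M" and ratio_le: "\<forall>c\<in>- S - S1. bnorm blk x c / \<omega> c \<le> M"
    and M: "sqrt s * M \<le> 2 / sqrt s * (\<Sum>b\<in>S1. \<omega> b * bnorm blk x b)"
  shows "\<bar>inner (A *v brestrict blk (S \<union> S1) x) (A *v brestrict blk (- S - S1) x)\<bar>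
           \<le> \<delta> * sqrt 2 * norm (brestrict blk (S \<union> S1) x)
               * (2 / sqrt s * (\<Sum>b\<in>- S. \<omega> b * bnorm blk x b))"
proof -
  define n where "n = bnorm blk x"
  define K where "K = \<delta> * sqrt 2 * norm (brestrict blk (S \<union> S1) x)"
  define f where "f C = inner (A *v brestrict blk (S \<union> S1) x) (A *v brestrict blk C x)" for C
  have additive: "f (C \<union> D) = f C + f D" if "C \<inter> D = {}" for C D
    using that by (simp add: f_def brestrict_Un matrix_vector_right_distrib inner_add_right)
  have chunk_bound: "\<bar>f C\<bar> \<le> K * sqrt (\<Sum>b\<in>C. (n b)\<^sup>2)" if "C \<subseteq> - S - S1" "wset \<omega> C \<le> s" for C
  proof -
    have "wset \<omega> (S \<union> C) \<le> 2 * s" "wset \<omega> (S1 \<union> C) \<le> 2 * s"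
      using wset_Un_le[of \<omega> S C] wset_Un_le[of \<omega> S1 C] assms(6,8) that(2) by auto
    then show ?thesis
      unfolding f_def K_def n_def norm_brestrict[symmetric]
      using that(1) \<open>S1 \<subseteq> - S\<close> by (intro wbrip_cross_term_le[OF rip \<open>0 \<le> \<delta>\<close>]) auto
  qed
  have "\<bar>f (- S - S1)\<bar> \<le> K * (sqrt s * M + 2 / sqrt s * (\<Sum>b\<in>- S - S1. \<omega> b * n b))"
    using additive chunk_bound \<open>0 \<le> M\<close> ratio_le \<omega>_pos \<omega>_small \<open>0 < s\<close> \<open>0 \<le> \<delta>\<close>
    by (intro additive_bound_by_chunks) (auto simp: K_def n_def bnorm_nonneg)
  also have "\<dots> \<le> K * (2 / sqrt s * (\<Sum>b\<in>S1. \<omega> b * n b) + 2 / sqrt s * (\<Sum>b\<in>- S - S1. \<omega> b * n b))"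
    using M \<open>0 \<le> \<delta>\<close> by (intro mult_left_mono) (auto simp: K_def n_def)
  also have "\<dots> = K * (2 / sqrt s * (\<Sum>b\<in>- S. \<omega> b * n b))"
    using \<open>S1 \<subseteq> - S\<close> by (simp add: sum.subset_diff[of S1 "- S"] algebra_simps)
  finally show ?thesis
    by (simp add: f_def K_def n_def)
qed

lemma norm_brestrict_le_by_wbrip:
  fixes A :: "real ^ 'n ^ 'm" and blk :: "'n::finite \<Rightarrow> 'b::finite" and \<omega> :: "'b \<Rightarrow> real"
  assumes rip: "wbrip_ineq blk \<omega> A (2 * s) \<delta>" and "0 \<le> \<delta>" and "\<delta> < 1" and "0 < s"
    and \<omega>_pos: "\<And>b. 0 < \<omega> b" and \<omega>_small: "\<And>b. (\<omega> b)\<^sup>2 \<le> s / 2" and "wset \<omega> S \<le> s"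
  shows "norm (brestrict blk S x) \<le> 2 * sqrt 2 * \<delta> / (1 - \<delta>) / sqrt s * (\<Sum>b\<in>- S. \<omega> b * bnorm blk x b)
           + sqrt (1 + \<delta>) / (1 - \<delta>) * norm (A *v x)"
proof -
  obtain S1 M where "S1 \<subseteq> - S" and "wset \<omega> S1 \<le> s" and "- S \<noteq> {} \<longrightarrow> S1 \<noteq> {}" and "0 \<le> M"
    and "\<forall>c\<in>- S - S1. bnorm blk x c / \<omega> c \<le> M"
    and "sqrt s * M \<le> 2 / sqrt s * (\<Sum>b\<in>S1. \<omega> b * bnorm blk x b)"
    by (rule exists_weighted_chunk[where \<omega> = \<omega> and n = "bnorm blk x" and R = "- S",
          OF \<omega>_pos \<omega>_small bnorm_nonneg \<open>0 < s\<close>])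
  define u where "u = brestrict blk (S \<union> S1) x"
  define v where "v = brestrict blk (- S - S1) x"
  define \<Sigma> where "\<Sigma> = (\<Sum>b\<in>- S. \<omega> b * bnorm blk x b)"
  have "S \<inter> S1 = {}"
    using \<open>S1 \<subseteq> - S\<close> by auto
  have "S \<union> S1 \<union> (- S - S1) = UNIV" and "(S \<union> S1) \<inter> (- S - S1) = {}"
    by auto
  then have "A *v x = A *v u + A *v v"
    using brestrict_Un[of "S \<union> S1" "- S - S1" blk x]
    by (simp add: u_def v_def flip: matrix_vector_right_distrib)
  have "wsparsity blk \<omega> u \<le> 2 * s"
    using wsparsity_le_wset[of blk "S \<union> S1" u \<omega>] wset_Un_le[of \<omega> S S1] assms(7) \<open>wset \<omega> S1 \<le> s\<close>
    by (auto simp: u_def brestrict_def)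
  then have lower: "(1 - \<delta>) * (norm u)\<^sup>2 \<le> (norm (A *v u))\<^sup>2"
    and "(norm (A *v u))\<^sup>2 \<le> (1 + \<delta>) * (norm u)\<^sup>2"
    using rip unfolding wbrip_ineq_def by auto
  then have "norm (A *v u) \<le> sqrt ((1 + \<delta>) * (norm u)\<^sup>2)"
    by (intro real_le_rsqrt)
  then have upper: "norm (A *v u) \<le> sqrt (1 + \<delta>) * norm u"
    by (simp add: real_sqrt_mult)
  have "\<bar>inner (A *v u) (A *v v)\<bar> \<le> \<delta> * sqrt 2 * norm u * (2 / sqrt s * \<Sigma>)"
    unfolding u_def v_def \<Sigma>_def
    by (rule wbrip_tail_inner_le[where \<omega> = \<omega>, OF rip \<open>0 \<le> \<delta>\<close> \<open>0 < s\<close> \<omega>_pos \<omega>_small]) fact+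
  then have cross: "\<bar>inner (A *v u) (A *v v)\<bar> \<le> norm u * (2 * sqrt 2 * \<delta> / sqrt s * \<Sigma>)"
    by (simp add: algebra_simps)
  have "0 \<le> \<Sigma>"
    unfolding \<Sigma>_def by (rule sum_nonneg) (simp add: bnorm_nonneg less_imp_le[OF \<omega>_pos])
  then have "(1 - \<delta>) * norm u \<le> sqrt (1 + \<delta>) * norm (A *v x) + 2 * sqrt 2 * \<delta> / sqrt s * \<Sigma>"
    using norm_le_by_lower_isometry[OF lower upper cross] \<open>A *v x = A *v u + A *v v\<close> \<open>0 \<le> \<delta>\<close> \<open>0 < s\<close>
    by simp
  moreover have "norm (brestrict blk S x) \<le> norm u"
    unfolding u_def brestrict_Un[OF \<open>S \<inter> S1 = {}\<close>]
    by (intro norm_le_norm_add_orthogonal orthogonal_brestrict_disjoint \<open>S \<inter> S1 = {}\<close>)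
  ultimately have "norm (brestrict blk S x) * (1 - \<delta>)
      \<le> sqrt (1 + \<delta>) * norm (A *v x) + 2 * sqrt 2 * \<delta> / sqrt s * \<Sigma>"
    using \<open>\<delta> < 1\<close> mult_right_mono[of "norm (brestrict blk S x)" "norm u" "1 - \<delta>"] by argo
  moreover have "2 * sqrt 2 * \<delta> / (1 - \<delta>) / sqrt s * \<Sigma> + sqrt (1 + \<delta>) / (1 - \<delta>) * norm (A *v x)
      = (sqrt (1 + \<delta>) * norm (A *v x) + 2 * sqrt 2 * \<delta> / sqrt s * \<Sigma>) / (1 - \<delta>)"
    by (simp add: add_divide_distrib)
  ultimately show ?thesis
    using \<open>\<delta> < 1\<close> by (simp add: \<Sigma>_def pos_le_divide_eq)
qed

theorem mainTheorem6:
  fixes A :: "real ^ 'n ^ 'm" and blk :: "'n \<Rightarrow> 'b::finite"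
    and \<omega> :: "'b \<Rightarrow> real" and s :: real
  assumes "block_structure blk"
    and "\<forall>b. 1 \<le> \<omega> b"
    and "s \<ge> 2 * (wmax \<omega>)\<^sup>2"
    and "wbrip blk \<omega> A (2 * s) (wbrip_const blk \<omega> A (2 * s))"
    and "wbrip_const blk \<omega> A (2 * s) < 1 / (2 * sqrt 2 + 1)"
  shows "brnsp blk \<omega> 2 A s
           (2 * sqrt 2 * wbrip_const blk \<omega> A (2 * s) / (1 - wbrip_const blk \<omega> A (2 * s)))
           (sqrt (1 + wbrip_const blk \<omega> A (2 * s)) / (1 - wbrip_const blk \<omega> A (2 * s)))"
proof -
  define \<delta> where "\<delta> = wbrip_const blk \<omega> A (2 * s)"
  have rip: "wbrip_ineq blk \<omega> A (2 * s) \<delta>" and "0 < \<delta>" and "\<delta> < 1"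
    using assms(4) by (auto simp: wbrip_def \<delta>_def)
  have \<omega>_pos: "0 < \<omega> b" for b
    using assms(2) by (meson less_le_trans zero_less_one)
  have \<omega>_small: "(\<omega> b)\<^sup>2 \<le> s / 2" for b
  proof -
    have "(\<omega> b)\<^sup>2 \<le> (wmax \<omega>)\<^sup>2"
      using \<omega>_pos[of b] by (intro power_mono) (auto simp: wmax_def)
    then show ?thesis
      using assms(3) by linarith
  qed
  have "0 < s"
    using \<omega>_small[of undefined] \<omega>_pos[of undefined] zero_less_power[of "\<omega> undefined" 2] by linarith
  have "\<delta> * (2 * sqrt 2 + 1) < 1"
    using assms(5) by (simp add: \<delta>_def less_divide_eq add_pos_pos)
  then have "2 * sqrt 2 * \<delta> < 1 - \<delta>"
    by (simp add: algebra_simps)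
  then show ?thesis
    unfolding \<delta>_def[symmetric] brnsp_def wnorm_2_eq_norm[OF \<omega>_pos] wnorm_1_brestrict[OF \<omega>_pos]
    using norm_brestrict_le_by_wbrip[OF rip _ \<open>\<delta> < 1\<close> \<open>0 < s\<close> \<omega>_pos \<omega>_small] \<open>0 < \<delta>\<close> \<open>\<delta> < 1\<close> \<open>0 < s\<close>
    by (simp add: powr_half_sqrt)
qed

end
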